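(* Algebras $H_1$ and $H_2$ in a variety $\Theta$ are isotypic if and only if they are LG-equivalent.
   Context: Setting: variety $\Theta$, infinite variable set $X^0$, $\Gamma^0$ its finite subsets, $W(X)$ free $\Theta$-algebras, points $\mu:W(X)\to H$. $\Phi(X)$ ($X\in\Gamma^0$) is the $X$-sort of the multi-sorted algebra of first-order formulas over $\Theta$ (free multi-sorted Halmos algebra generated by equalities $w\equiv w'$, $w,w'\in W(X)$), with valuation $Val^X_H$ into subsets of $\mathrm{Hom}(W(X),H)$; a point $\mu$ satisfies $u$ iff $\mu\in Val^X_H(u)$, and $LKer(\mu)=\{u\in\Phi(X):\mu\in Val^X_H(u)\}$ (the LG-type of $\mu$). For $T\subset\Phi(X)$, $T^L_H=\{\mu:W(X)\to H\mid T\subset LKer(\mu)\}$; for $A\subset\mathrm{Hom}(W(X),H)$, $A^L_H=\bigcap_{\mu\in A}LKer(\mu)$; $T^{LL}_H=(T^L_H)^L_H$. $H_1,H_2$ are LG-equivalent if $T^{LL}_{H_1}=T^{LL}_{H_2}$ for every $X\in\Gamma^0$ and every $T\subset\Phi(X)$. $S^X(H)=\{LKer(\mu)\mid \mu:W(X)\to H\}$; $H_1,H_2$ are isotypic if $S^X(H_1)=S^X(H_2)$ for every $X\in\Gamma^0$. *)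

theory Defs
  imports "HOL-Library.FuncSet"
begin

text \<open>A signature is given by an arity function on operation symbols of type 'f.
  An algebra of the signature with carrier the type 'a is an interpretation
  I :: 'f => 'a list => 'a (only applied to argument lists of the right length).\<close>

datatype ('f, 'v) trm = Var 'v | App 'f "('f, 'v) trm list"

fun wf_trm :: "('f \<Rightarrow> nat) \<Rightarrow> ('f, 'v) trm \<Rightarrow> bool" where
  "wf_trm ar (Var x) = True"
| "wf_trm ar (App f ts) = (length ts = ar f \<and> (\<forall>t\<in>set ts. wf_trm ar t))"

fun vars_trm :: "('f, 'v) trm \<Rightarrow> 'v set" where
  "vars_trm (Var x) = {x}"
| "vars_trm (App f ts) = (\<Union>t\<in>set ts. vars_trm t)"

fun eval_trm :: "('f \<Rightarrow> 'a list \<Rightarrow> 'a) \<Rightarrow> ('v \<Rightarrow> 'a) \<Rightarrow> ('f, 'v) trm \<Rightarrow> 'a" where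
  "eval_trm I \<mu> (Var x) = \<mu> x"
| "eval_trm I \<mu> (App f ts) = I f (map (eval_trm I \<mu>) ts)"

definition in_variety ::
  "('f \<Rightarrow> nat) \<Rightarrow> (('f, 'v) trm \<times> ('f, 'v) trm) set \<Rightarrow> ('f \<Rightarrow> 'a list \<Rightarrow> 'a) \<Rightarrow> bool" where
  "in_variety ar E I \<longleftrightarrow>
     (\<forall>(s, t)\<in>E. wf_trm ar s \<and> wf_trm ar t \<and> (\<forall>\<mu>. eval_trm I \<mu> s = eval_trm I \<mu> t))"

datatype ('f, 'v) fm =
    Eq "('f, 'v) trm" "('f, 'v) trm"
  | FFalse | FTrue
  | Neg "('f, 'v) fm"
  | Conj "('f, 'v) fm" "('f, 'v) fm"
  | Disj "('f, 'v) fm" "('f, 'v) fm"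
  | Ex 'v "('f, 'v) fm"
  | All 'v "('f, 'v) fm"

fun wf_fm :: "('f \<Rightarrow> nat) \<Rightarrow> ('f, 'v) fm \<Rightarrow> bool" where
  "wf_fm ar (Eq s t) = (wf_trm ar s \<and> wf_trm ar t)"
| "wf_fm ar FFalse = True"
| "wf_fm ar FTrue = True"
| "wf_fm ar (Neg u) = wf_fm ar u"
| "wf_fm ar (Conj u v) = (wf_fm ar u \<and> wf_fm ar v)"
| "wf_fm ar (Disj u v) = (wf_fm ar u \<and> wf_fm ar v)"
| "wf_fm ar (Ex x u) = wf_fm ar u"
| "wf_fm ar (All x u) = wf_fm ar u"

fun free_vars :: "('f, 'v) fm \<Rightarrow> 'v set" where
  "free_vars (Eq s t) = vars_trm s \<union> vars_trm t"
| "free_vars FFalse = {}"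
| "free_vars FTrue = {}"
| "free_vars (Neg u) = free_vars u"
| "free_vars (Conj u v) = free_vars u \<union> free_vars v"
| "free_vars (Disj u v) = free_vars u \<union> free_vars v"
| "free_vars (Ex x u) = free_vars u - {x}"
| "free_vars (All x u) = free_vars u - {x}"

definition Phi :: "('f \<Rightarrow> nat) \<Rightarrow> 'v set \<Rightarrow> ('f, 'v) fm set" where
  "Phi ar X = {u. wf_fm ar u \<and> free_vars u \<subseteq> X}"

fun sat :: "('f \<Rightarrow> 'a list \<Rightarrow> 'a) \<Rightarrow> ('v \<Rightarrow> 'a) \<Rightarrow> ('f, 'v) fm \<Rightarrow> bool" where
  "sat I \<mu> (Eq s t) = (eval_trm I \<mu> s = eval_trm I \<mu> t)"
| "sat I \<mu> FFalse = False"
| "sat I \<mu> FTrue = True"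
| "sat I \<mu> (Neg u) = (\<not> sat I \<mu> u)"
| "sat I \<mu> (Conj u v) = (sat I \<mu> u \<and> sat I \<mu> v)"
| "sat I \<mu> (Disj u v) = (sat I \<mu> u \<or> sat I \<mu> v)"
| "sat I \<mu> (Ex x u) = (\<exists>a. sat I (\<mu>(x := a)) u)"
| "sat I \<mu> (All x u) = (\<forall>a. sat I (\<mu>(x := a)) u)"

text \<open>Points W(X) -> H correspond to assignments X -> H (W(X) free in \<Theta>).\<close>
definition Pts :: "'v set \<Rightarrow> ('v \<Rightarrow> 'a) set" where
  "Pts X = X \<rightarrow>\<^sub>E (UNIV :: 'a set)"

definition Val :: "'v set \<Rightarrow> ('f \<Rightarrow> 'a list \<Rightarrow> 'a) \<Rightarrow> ('f, 'v) fm \<Rightarrow> ('v \<Rightarrow> 'a) set" where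
  "Val X I u = {\<mu> \<in> Pts X. sat I \<mu> u}"

definition LKer ::
  "('f \<Rightarrow> nat) \<Rightarrow> 'v set \<Rightarrow> ('f \<Rightarrow> 'a list \<Rightarrow> 'a) \<Rightarrow> ('v \<Rightarrow> 'a) \<Rightarrow> ('f, 'v) fm set" where
  "LKer ar X I \<mu> = {u \<in> Phi ar X. \<mu> \<in> Val X I u}"

definition TL ::
  "('f \<Rightarrow> nat) \<Rightarrow> 'v set \<Rightarrow> ('f \<Rightarrow> 'a list \<Rightarrow> 'a) \<Rightarrow> ('f, 'v) fm set \<Rightarrow> ('v \<Rightarrow> 'a) set" where
  "TL ar X I T = {\<mu> \<in> Pts X. T \<subseteq> LKer ar X I \<mu>}"

definition AL ::
  "('f \<Rightarrow> nat) \<Rightarrow> 'v set \<Rightarrow> ('f \<Rightarrow> 'a list \<Rightarrow> 'a) \<Rightarrow> ('v \<Rightarrow> 'a) set \<Rightarrow> ('f, 'v) fm set" where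
  "AL ar X I A = Phi ar X \<inter> (\<Inter>\<mu>\<in>A. LKer ar X I \<mu>)"

definition TLL ::
  "('f \<Rightarrow> nat) \<Rightarrow> 'v set \<Rightarrow> ('f \<Rightarrow> 'a list \<Rightarrow> 'a) \<Rightarrow> ('f, 'v) fm set \<Rightarrow> ('f, 'v) fm set" where
  "TLL ar X I T = AL ar X I (TL ar X I T)"

definition LG_equivalent ::
  "('f \<Rightarrow> nat) \<Rightarrow> ('f \<Rightarrow> 'a list \<Rightarrow> 'a) \<Rightarrow> ('f \<Rightarrow> 'b list \<Rightarrow> 'b) \<Rightarrow> ('v::type) itself \<Rightarrow> bool" where
  "LG_equivalent ar I1 I2 (_ :: 'v itself) \<longleftrightarrow>
     (\<forall>X :: 'v set. finite X \<longrightarrow>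
        (\<forall>T \<subseteq> Phi ar X. TLL ar X I1 T = TLL ar X I2 T))"

definition SX :: "('f \<Rightarrow> nat) \<Rightarrow> 'v set \<Rightarrow> ('f \<Rightarrow> 'a list \<Rightarrow> 'a) \<Rightarrow> ('f, 'v) fm set set" where
  "SX ar X I = {LKer ar X I \<mu> | \<mu>. \<mu> \<in> Pts X}"

definition isotypic ::
  "('f \<Rightarrow> nat) \<Rightarrow> ('f \<Rightarrow> 'a list \<Rightarrow> 'a) \<Rightarrow> ('f \<Rightarrow> 'b list \<Rightarrow> 'b) \<Rightarrow> ('v::type) itself \<Rightarrow> bool" where
  "isotypic ar I1 I2 (_ :: 'v itself) \<longleftrightarrow>
     (\<forall>X :: 'v set. finite X \<longrightarrow> SX ar X I1 = SX ar X I2)"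

end

theory Submission
  imports Defs
begin

text \<open>The closure \<open>T\<^sup>L\<^sup>L\<close> is the intersection of all LG-types of \<open>H\<close> containing \<open>T\<close>, so it is
  determined by \<open>S\<^sup>X(H)\<close>; this gives isotypic \<open>\<Longrightarrow>\<close> LG-equivalent. Conversely, LG-types are
  complete theories (closed under negation), hence maximal among consistent sets, and
  every LG-type is its own closure. If the closures agree, an LG-type of \<open>H\<^sub>1\<close> equals its
  \<open>H\<^sub>2\<close>-closure, which is consistent, so it lies in some LG-type of \<open>H\<^sub>2\<close> and by maximality
  equals it.\<close>

lemma TLL_eq_Inter_SX: "TLL ar X I T = Phi ar X \<inter> \<Inter>{K \<in> SX ar X I. T \<subseteq> K}"
  unfolding TLL_def AL_def TL_def SX_def by blast

lemma LKer_subset_Phi: "LKer ar X I \<mu> \<subseteq> Phi ar X"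
  unfolding LKer_def by blast

lemma FFalse_notin_LKer: "FFalse \<notin> LKer ar X I \<mu>"
  by (simp add: LKer_def Val_def)

lemma LKer_subset_imp_eq:
  assumes \<mu>: "\<mu> \<in> Pts X" and sub: "LKer ar X I \<mu> \<subseteq> LKer ar X J \<nu>"
  shows "LKer ar X I \<mu> = LKer ar X J \<nu>"
proof
  show "LKer ar X J \<nu> \<subseteq> LKer ar X I \<mu>"
  proof
    fix u assume u: "u \<in> LKer ar X J \<nu>"
    show "u \<in> LKer ar X I \<mu>"
    proof (rule ccontr)
      assume "u \<notin> LKer ar X I \<mu>"
      moreover have "u \<in> Phi ar X" using u by (simp add: LKer_def)
      ultimately have "Neg u \<in> LKer ar X I \<mu>" using \<mu> by (simp add: LKer_def Val_def Phi_def)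
      hence "Neg u \<in> LKer ar X J \<nu>" using sub by blast
      thus False using u by (simp add: LKer_def Val_def)
    qed
  qed
qed (rule sub)

lemma TLL_LKer:
  assumes "\<mu> \<in> Pts X"
  shows "TLL ar X I (LKer ar X I \<mu>) = LKer ar X I \<mu>"
proof -
  have "{K \<in> SX ar X I. LKer ar X I \<mu> \<subseteq> K} = {LKer ar X I \<mu>}"
    using LKer_subset_imp_eq[OF assms, of ar I I] assms unfolding SX_def by blast
  thus ?thesis using LKer_subset_Phi[of ar X I \<mu>] by (simp add: TLL_eq_Inter_SX Int_absorb1)
qed

lemma LKer_in_SX_if_TLL_eq:
  fixes I :: "'f \<Rightarrow> 'a list \<Rightarrow> 'a" and J :: "'f \<Rightarrow> 'b list \<Rightarrow> 'b"
  assumes \<mu>: "\<mu> \<in> Pts X"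
    and eq: "TLL ar X I (LKer ar X I \<mu>) = TLL ar X J (LKer ar X I \<mu>)"
  shows "LKer ar X I \<mu> \<in> SX ar X J"
proof -
  let ?K = "LKer ar X I \<mu>"
  have closed: "TLL ar X J ?K = ?K" using eq TLL_LKer[OF \<mu>, of ar I] by (rule subst)
  have "FFalse \<in> Phi ar X" by (simp add: Phi_def)
  then have "\<exists>K \<in> SX ar X J. ?K \<subseteq> K"
    using closed FFalse_notin_LKer[of ar X I \<mu>] unfolding TLL_eq_Inter_SX by blast
  then obtain \<nu> where \<nu>: "\<nu> \<in> Pts X" "?K \<subseteq> LKer ar X J \<nu>"
    unfolding SX_def by blast
  with LKer_subset_imp_eq[OF \<mu>] have "?K = LKer ar X J \<nu>" by blast
  thus ?thesis using \<nu>(1) unfolding SX_def by blast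
qed

lemma SX_subset_if_TLL_eq:
  fixes I :: "'f \<Rightarrow> 'a list \<Rightarrow> 'a" and J :: "'f \<Rightarrow> 'b list \<Rightarrow> 'b"
  assumes "\<And>T. T \<subseteq> Phi ar X \<Longrightarrow> TLL ar X I T = TLL ar X J T"
  shows "SX ar X I \<subseteq> SX ar X J"
proof
  fix K assume "K \<in> SX ar X I"
  then obtain \<mu> where "\<mu> \<in> Pts X" "K = LKer ar X I \<mu>" unfolding SX_def by blast
  with LKer_in_SX_if_TLL_eq[OF _ assms[OF LKer_subset_Phi]] show "K \<in> SX ar X J" by blast
qed

theorem corollary3p6:
  fixes ar :: "'f \<Rightarrow> nat"
    and E :: "(('f, 'v) trm \<times> ('f, 'v) trm) set"
    and H1 :: "'f \<Rightarrow> 'a list \<Rightarrow> 'a"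
    and H2 :: "'f \<Rightarrow> 'b list \<Rightarrow> 'b"
  assumes "infinite (UNIV :: 'v set)"
    and "in_variety ar E H1"
    and "in_variety ar E H2"
  shows "isotypic ar H1 H2 TYPE('v) \<longleftrightarrow> LG_equivalent ar H1 H2 TYPE('v)"
proof
  assume "isotypic ar H1 H2 TYPE('v)"
  thus "LG_equivalent ar H1 H2 TYPE('v)"
    unfolding isotypic_def LG_equivalent_def by (simp add: TLL_eq_Inter_SX)
next
  assume LG: "LG_equivalent ar H1 H2 TYPE('v)"
  show "isotypic ar H1 H2 TYPE('v)"
    unfolding isotypic_def
  proof (intro allI impI)
    fix X :: "'v set" assume "finite X"
    with LG have TLL_eq: "\<And>T. T \<subseteq> Phi ar X \<Longrightarrow> TLL ar X H1 T = TLL ar X H2 T"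
      unfolding LG_equivalent_def by blast
    show "SX ar X H1 = SX ar X H2"
      using SX_subset_if_TLL_eq[OF TLL_eq] SX_subset_if_TLL_eq[OF TLL_eq[symmetric]] by (rule subset_antisym)
  qed
qed

end
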